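(* Let $\Omega\subset\mathbb{R}^d$ be open and connected, $\mathcal{I}=(0,T)$, and let $\mathbf{f}:\mathbb{R}\to\mathbb{R}^d$ be a smooth flux. Let $\phi:\Omega\times\mathcal{I}\to\mathbb{R}$ be a smooth solution of $\partial_t\phi+\nabla\cdot\mathbf{f}(\phi)=0$, and let $\eta:\mathbb{R}^d\to\mathbb{R}$ be a twice differentiable convex function, evaluated at $\nabla\phi$, i.e. $\eta=\eta(\nabla\phi)$. Then $$\partial_t\eta+\nabla\cdot\mathbf{q}=\mathscr{A},$$ where $$\mathbf{q}=\Big(\frac{\partial\eta}{\partial\nabla\phi}\cdot\nabla\phi\Big)\frac{\partial\mathbf{f}}{\partial\phi},\qquad \mathscr{A}=\big(\mathbf{H}_{\nabla\phi}\eta\,\nabla\phi\big)\cdot\Big(\mathbf{H}_{\mathbf{x}}\phi\,\frac{\partial\mathbf{f}}{\partial\phi}\Big).$$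
   Context: $\frac{\partial\eta}{\partial\nabla\phi}\in\mathbb{R}^d$ denotes the gradient of $\eta$ with respect to its (vector) argument, evaluated at $\nabla\phi$; $\frac{\partial\mathbf{f}}{\partial\phi}=\mathbf{f}'(\phi)\in\mathbb{R}^d$. $(\mathbf{H}_{\mathbf{x}}\phi)_{mn}=\partial^2\phi/\partial x_m\partial x_n$ is the spatial Hessian of $\phi$ and $(\mathbf{H}_{\nabla\phi}\eta)_{mn}=\partial^2\eta/\partial(\nabla_m\phi)\partial(\nabla_n\phi)$ is the Hessian of $\eta$ with respect to its argument, evaluated at $\nabla\phi$. *)

theory Defs
  imports "HOL-Analysis.Analysis"
begin

fun pderivs :: "'a::euclidean_space list \<Rightarrow> ('a \<Rightarrow> real) \<Rightarrow> ('a \<Rightarrow> real)" where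
  "pderivs [] g = g"
| "pderivs (v # vs) g = (\<lambda>x. frechet_derivative (pderivs vs g) (at x) v)"

definition smooth_on :: "'a::euclidean_space set \<Rightarrow> ('a \<Rightarrow> real) \<Rightarrow> bool" where
  "smooth_on S g \<longleftrightarrow> (\<forall>vs. set vs \<subseteq> Basis \<longrightarrow> pderivs vs g differentiable_on S)"

definition pd_x :: "'n::finite \<Rightarrow> ((real^'n) \<times> real \<Rightarrow> real) \<Rightarrow> (real^'n) \<times> real \<Rightarrow> real" where
  "pd_x i g p = frechet_derivative g (at p) (axis i 1, 0)"

definition pd_t :: "((real^'n::finite) \<times> real \<Rightarrow> real) \<Rightarrow> (real^'n) \<times> real \<Rightarrow> real" where
  "pd_t g p = frechet_derivative g (at p) (0, 1)"

definition grad_x :: "((real^'n::finite) \<times> real \<Rightarrow> real) \<Rightarrow> (real^'n) \<times> real \<Rightarrow> real^'n" where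
  "grad_x g p = (\<chi> i. pd_x i g p)"

definition hess_x :: "((real^'n::finite) \<times> real \<Rightarrow> real) \<Rightarrow> (real^'n) \<times> real \<Rightarrow> real^'n^'n" where
  "hess_x g p = (\<chi> m n. pd_x n (pd_x m g) p)"

definition div_x :: "((real^'n::finite) \<times> real \<Rightarrow> real^'n) \<Rightarrow> (real^'n) \<times> real \<Rightarrow> real" where
  "div_x Q p = (\<Sum>i\<in>UNIV. pd_x i (\<lambda>q. Q q $ i) p)"

definition grad_v :: "(real^'n::finite \<Rightarrow> real) \<Rightarrow> real^'n \<Rightarrow> real^'n" where
  "grad_v e v = (\<chi> i. frechet_derivative e (at v) (axis i 1))"

definition hess_v :: "(real^'n::finite \<Rightarrow> real) \<Rightarrow> real^'n \<Rightarrow> real^'n^'n" where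
  "hess_v e v = (\<chi> m n. frechet_derivative (\<lambda>w. grad_v e w $ m) (at v) (axis n 1))"

definition flux_deriv :: "(real \<Rightarrow> real^'n::finite) \<Rightarrow> real \<Rightarrow> real^'n" where
  "flux_deriv f s = frechet_derivative f (at s) 1"

end

theory Submission
  imports Defs
begin

text \<open>
  Differentiating the conservation law pd_t phi = - f'(phi) . grad phi in x_i and exchanging the
  mixed partial derivatives gives pd_t (grad phi) = - (H_x phi f'(phi) + (f''(phi) . grad phi) grad phi).
  By the chain rule pd_t eta(grad phi) is grad eta paired with this vector, while the product rule gives
  div q = grad eta . (H_x phi f') + (H_eta H_x phi f') . grad phi + (grad eta . grad phi) (f'' . grad phi).
  Everything cancels except (H_eta H_x phi f') . grad phi, which is the right-hand side because H_eta is
  symmetric.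

  Both Hessians are symmetric by Schwarz's theorem, obtained from the limit of the second difference
  quotient; it only needs differentiability near the point and differentiability of the two directional
  derivatives at the point.
\<close>

section \<open>Symmetry of second derivatives\<close>

definition second_difference ::
    "('a::real_normed_vector \<Rightarrow> real) \<Rightarrow> 'a \<Rightarrow> 'a \<Rightarrow> 'a \<Rightarrow> real \<Rightarrow> real"
  where "second_difference g a u v h = g (a + h *\<^sub>R u + h *\<^sub>R v) - g (a + h *\<^sub>R u) - g (a + h *\<^sub>R v) + g a"

lemma second_difference_commute: "second_difference g a u v = second_difference g a v u"
  by (simp add: fun_eq_iff second_difference_def algebra_simps)

lemma has_real_derivative_along_line:
  fixes g :: "'a::real_normed_vector \<Rightarrow> real"
  assumes "g differentiable (at (c + s *\<^sub>R v))"
  shows "((\<lambda>s. g (c + s *\<^sub>R v)) has_real_derivative frechet_derivative g (at (c + s *\<^sub>R v)) v) (at s)"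
proof -
  let ?D = "frechet_derivative g (at (c + s *\<^sub>R v))"
  have "((\<lambda>t. c + t *\<^sub>R v) has_derivative (\<lambda>t. t *\<^sub>R v)) (at s)"
    by (auto intro!: derivative_eq_intros)
  then have "((\<lambda>s. g (c + s *\<^sub>R v)) has_derivative (\<lambda>t. ?D (t *\<^sub>R v))) (at s)"
    using has_derivative_compose assms frechet_derivative_works by blast
  moreover have "?D (t *\<^sub>R v) = ?D v * t" for t
    using linear_frechet_derivative[OF assms] by (simp add: linear_scale)
  ultimately show ?thesis by (simp add: has_field_derivative_def)
qed

lemma second_difference_mean_value:
  fixes g :: "'a::real_normed_vector \<Rightarrow> real"
  assumes "0 < h"
    and "\<And>s. 0 \<le> s \<Longrightarrow> s \<le> h \<Longrightarrow>
           g differentiable (at (a + h *\<^sub>R u + s *\<^sub>R v)) \<and> g differentiable (at (a + s *\<^sub>R v))"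
  shows "\<exists>\<xi>. 0 < \<xi> \<and> \<xi> < h \<and> second_difference g a u v h
           = h * (frechet_derivative g (at (a + h *\<^sub>R u + \<xi> *\<^sub>R v)) v
                  - frechet_derivative g (at (a + \<xi> *\<^sub>R v)) v)"
proof -
  define \<psi> where "\<psi> s = g (a + h *\<^sub>R u + s *\<^sub>R v) - g (a + s *\<^sub>R v)" for s
  define \<psi>' where "\<psi>' s = frechet_derivative g (at (a + h *\<^sub>R u + s *\<^sub>R v)) v
                          - frechet_derivative g (at (a + s *\<^sub>R v)) v" for s
  have "(\<psi> has_real_derivative \<psi>' s) (at s)" if "0 \<le> s" "s \<le> h" for s
    unfolding \<psi>_def \<psi>'_def using assms(2)[OF that]
    by (intro DERIV_diff has_real_derivative_along_line) auto
  with MVT2[of 0 h \<psi> \<psi>'] \<open>0 < h\<close> obtain \<xi> where "0 < \<xi>" "\<xi> < h" "\<psi> h - \<psi> 0 = h * \<psi>' \<xi>"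
    by auto
  moreover have "\<psi> h - \<psi> 0 = second_difference g a u v h"
    by (simp add: \<psi>_def second_difference_def)
  ultimately show ?thesis unfolding \<psi>'_def by auto
qed

lemma second_difference_remainder_bound:
  fixes g L :: "'a::real_normed_vector \<Rightarrow> real" and a v :: 'a
  defines "R y \<equiv> frechet_derivative g (at y) v - frechet_derivative g (at a) v - L (y - a)"
  assumes "linear L" "0 < h" "h * (norm u + norm v) < r" "0 \<le> e"
    and r: "\<And>y. norm (y - a) < r \<Longrightarrow> g differentiable (at y) \<and> \<bar>R y\<bar> \<le> e * norm (y - a)"
  shows "\<bar>second_difference g a u v h - h\<^sup>2 * L u\<bar> \<le> e * h\<^sup>2 * (norm u + 2 * norm v)"
proof -
  have near: "norm (h *\<^sub>R u + s *\<^sub>R v) \<le> h * norm u + h * norm v" "norm (s *\<^sub>R v) \<le> h * norm v"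
    if "0 \<le> s" "s \<le> h" for s
  proof -
    have "s * norm v \<le> h * norm v" using that by (simp add: mult_right_mono)
    then show "norm (h *\<^sub>R u + s *\<^sub>R v) \<le> h * norm u + h * norm v" "norm (s *\<^sub>R v) \<le> h * norm v"
      using that \<open>0 < h\<close> norm_triangle_ineq[of "h *\<^sub>R u" "s *\<^sub>R v"] by simp_all
  qed
  have "0 \<le> h * norm u" using \<open>0 < h\<close> by simp
  then have r': "g differentiable (at (a + w)) \<and> \<bar>R (a + w)\<bar> \<le> e * norm w"
    if "norm w \<le> h * norm u + h * norm v" for w
    using r[of "a + w"] that assms(4) by (simp add: distrib_left)
  have "g differentiable (at (a + h *\<^sub>R u + s *\<^sub>R v)) \<and> g differentiable (at (a + s *\<^sub>R v))"
    if "0 \<le> s" "s \<le> h" for s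
    using r'[OF near(1)[OF that]] r'[of "s *\<^sub>R v"] near(2)[OF that] \<open>0 \<le> h * norm u\<close>
    by (simp add: add.assoc)
  from second_difference_mean_value[OF \<open>0 < h\<close> this] obtain \<xi> where "0 < \<xi>" "\<xi> < h" and mv:
    "second_difference g a u v h = h * (frechet_derivative g (at (a + h *\<^sub>R u + \<xi> *\<^sub>R v)) v
                                        - frechet_derivative g (at (a + \<xi> *\<^sub>R v)) v)"
    by blast
  then have \<xi>: "0 \<le> \<xi>" "\<xi> \<le> h" by simp_all
  have R1: "\<bar>R (a + (h *\<^sub>R u + \<xi> *\<^sub>R v))\<bar> \<le> e * (h * norm u + h * norm v)"
    using r'[OF near(1)[OF \<xi>]] near(1)[OF \<xi>] \<open>0 \<le> e\<close> by (meson mult_left_mono order_trans)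
  have R2: "\<bar>R (a + \<xi> *\<^sub>R v)\<bar> \<le> e * (h * norm v)"
    using r'[of "\<xi> *\<^sub>R v"] near(2)[OF \<xi>] \<open>0 \<le> h * norm u\<close> \<open>0 \<le> e\<close>
    by (meson add_increasing mult_left_mono order_trans)
  have "second_difference g a u v h - h\<^sup>2 * L u = h * (R (a + (h *\<^sub>R u + \<xi> *\<^sub>R v)) - R (a + \<xi> *\<^sub>R v))"
    using \<open>linear L\<close> unfolding mv R_def by (simp add: linear_add linear_scale algebra_simps power2_eq_square)
  also have "\<bar>\<dots>\<bar> \<le> h * (e * (h * norm u + h * norm v) + e * (h * norm v))"
    using R1 R2 \<open>0 < h\<close> by (simp add: abs_mult mult_left_mono abs_triangle_ineq4 order_trans[OF abs_triangle_ineq4])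
  also have "\<dots> = e * h\<^sup>2 * (norm u + 2 * norm v)"
    by (simp add: algebra_simps power2_eq_square)
  finally show ?thesis .
qed

lemma second_difference_approx:
  fixes g :: "'a::real_normed_vector \<Rightarrow> real"
  assumes "open S" "a \<in> S" "\<And>x. x \<in> S \<Longrightarrow> g differentiable (at x)"
    and "((\<lambda>x. frechet_derivative g (at x) v) has_derivative L) (at a)" and "e > 0"
  shows "\<exists>d>0. \<forall>h. 0 < h \<and> h < d \<longrightarrow>
           \<bar>second_difference g a u v h - h\<^sup>2 * L u\<bar> \<le> e * h\<^sup>2 * (norm u + 2 * norm v)"
proof -
  obtain r where "r > 0" and r: "\<And>y. norm (y - a) < r \<Longrightarrow> g differentiable (at y) \<and>
      \<bar>frechet_derivative g (at y) v - frechet_derivative g (at a) v - L (y - a)\<bar> \<le> e * norm (y - a)"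
  proof -
    obtain r1 where "r1 > 0" "\<And>y. norm (y - a) < r1 \<Longrightarrow> y \<in> S"
      using assms(1,2) unfolding open_dist dist_norm by blast
    moreover obtain r2 where "r2 > 0" "\<And>y. norm (y - a) < r2 \<Longrightarrow>
        \<bar>frechet_derivative g (at y) v - frechet_derivative g (at a) v - L (y - a)\<bar> \<le> e * norm (y - a)"
      using assms(4,5) unfolding has_derivative_at_alt by force
    ultimately show ?thesis
      using assms(3) by (intro that[of "min r1 r2"]) auto
  qed
  have "linear L" using assms(4) has_derivative_linear by blast
  have "norm u + norm v + 1 > 0"
    using norm_ge_zero[of u] norm_ge_zero[of v] by linarith
  define d where "d = r / (norm u + norm v + 1)"
  have "d > 0" using \<open>r > 0\<close> \<open>norm u + norm v + 1 > 0\<close> by (simp add: d_def)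
  moreover have "\<bar>second_difference g a u v h - h\<^sup>2 * L u\<bar> \<le> e * h\<^sup>2 * (norm u + 2 * norm v)"
    if "0 < h" "h < d" for h
  proof (rule second_difference_remainder_bound[where r = r, OF \<open>linear L\<close> \<open>0 < h\<close> _ _ r])
    show "h * (norm u + norm v) < r"
      using that \<open>norm u + norm v + 1 > 0\<close> by (simp add: d_def pos_less_divide_eq algebra_simps)
  qed (use \<open>e > 0\<close> in auto)
  ultimately show ?thesis by blast
qed

lemma second_difference_quotient_tendsto:
  fixes g :: "'a::real_normed_vector \<Rightarrow> real"
  assumes "open S" "a \<in> S" "\<And>x. x \<in> S \<Longrightarrow> g differentiable (at x)"
    and "((\<lambda>x. frechet_derivative g (at x) v) has_derivative L) (at a)"
  shows "((\<lambda>h. second_difference g a u v h / h\<^sup>2) \<longlongrightarrow> L u) (at_right 0)"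
proof (rule tendstoI)
  fix e :: real assume "e > 0"
  define c where "c = norm u + 2 * norm v"
  have "c \<ge> 0" by (simp add: c_def)
  obtain d where "d > 0" and d: "\<forall>h. 0 < h \<and> h < d \<longrightarrow>
      \<bar>second_difference g a u v h - h\<^sup>2 * L u\<bar> \<le> e / (2 * (c + 1)) * h\<^sup>2 * c"
    using second_difference_approx[OF assms, of "e / (2 * (c + 1))" u] \<open>e > 0\<close> \<open>c \<ge> 0\<close>
    unfolding c_def by auto
  have "dist (second_difference g a u v h / h\<^sup>2) (L u) < e" if "0 < h" "h < d" for h
  proof -
    have "dist (second_difference g a u v h / h\<^sup>2) (L u) = \<bar>second_difference g a u v h - h\<^sup>2 * L u\<bar> / h\<^sup>2"
      using \<open>0 < h\<close> by (simp add: dist_real_def field_simps)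
    also have "\<dots> \<le> e / (2 * (c + 1)) * c"
      using d \<open>0 < h\<close> \<open>h < d\<close> by (simp add: pos_divide_le_eq mult_ac)
    also have "\<dots> < e"
      using \<open>e > 0\<close> \<open>c \<ge> 0\<close> by (simp add: field_simps) (simp add: add_nonneg_pos)
    finally show ?thesis .
  qed
  then show "\<forall>\<^sub>F h in at_right 0. dist (second_difference g a u v h / h\<^sup>2) (L u) < e"
    unfolding eventually_at_right_field using \<open>d > 0\<close> by auto
qed

lemma second_directional_derivatives_commute:
  fixes g :: "'a::real_normed_vector \<Rightarrow> real"
  assumes "open S" "a \<in> S" "\<And>x. x \<in> S \<Longrightarrow> g differentiable (at x)"
    and "((\<lambda>x. frechet_derivative g (at x) u) has_derivative Lu) (at a)"
    and "((\<lambda>x. frechet_derivative g (at x) v) has_derivative Lv) (at a)"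
  shows "Lu v = Lv u"
proof -
  have "((\<lambda>h. second_difference g a u v h / h\<^sup>2) \<longlongrightarrow> Lv u) (at_right 0)"
    using second_difference_quotient_tendsto[OF assms(1-3,5)] .
  moreover have "((\<lambda>h. second_difference g a u v h / h\<^sup>2) \<longlongrightarrow> Lu v) (at_right 0)"
    using second_difference_quotient_tendsto[OF assms(1-4), of v]
    by (simp only: second_difference_commute[of g a v u])
  ultimately show ?thesis
    using tendsto_unique[OF trivial_limit_at_right_real] by blast
qed

lemma smooth_on_pderivs_differentiable:
  assumes "smooth_on S g" "open S" "x \<in> S" "set vs \<subseteq> Basis"
  shows "pderivs vs g differentiable (at x)"
  using assms unfolding smooth_on_def differentiable_on_def by (metis at_within_open)

lemma smooth_on_pderivs_commute:
  assumes "smooth_on S g" "open S" "x \<in> S" "u \<in> Basis" "v \<in> Basis"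
  shows "pderivs [u, v] g x = pderivs [v, u] g x"
proof -
  have "g differentiable (at y)" if "y \<in> S" for y
    using smooth_on_pderivs_differentiable[OF assms(1,2) that, of "[]"] by simp
  moreover have D: "((\<lambda>y. frechet_derivative g (at y) w) has_derivative frechet_derivative (pderivs [w] g) (at x)) (at x)"
    if "w \<in> Basis" for w
    using smooth_on_pderivs_differentiable[OF assms(1-3), of "[w]"] that by (simp add: frechet_derivative_works)
  ultimately show ?thesis
    using second_directional_derivatives_commute[OF assms(2,3) _ D[OF assms(4)] D[OF assms(5)]] by simp
qed

lemma frechet_derivative_apply:
  "(g has_derivative g') (at x) \<Longrightarrow> frechet_derivative g (at x) w = g' w"
  by (drule frechet_derivative_at) simp

lemma has_derivative_vec_nthI:
  fixes f :: "'a::real_normed_vector \<Rightarrow> real^'n::finite"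
  assumes "\<And>i. ((\<lambda>x. f x $ i) has_derivative (\<lambda>h. f' h $ i)) (at x)"
  shows "(f has_derivative f') (at x)"
proof -
  have "\<forall>b\<in>Basis. ((\<lambda>x. f x \<bullet> b) has_derivative (\<lambda>h. f' h \<bullet> b)) (at x within UNIV)"
    using assms by (auto simp: Basis_vec_def inner_axis)
  then show ?thesis
    using has_derivative_componentwise_within[of f f' x UNIV] by simp
qed

lemma differentiable_vec_nthI:
  fixes f :: "'a::real_normed_vector \<Rightarrow> real^'n::finite"
  assumes "\<And>i. (\<lambda>x. f x $ i) differentiable (at x)"
  shows "f differentiable (at x)"
proof -
  have "(f has_derivative (\<lambda>h. \<chi> i. frechet_derivative (\<lambda>x. f x $ i) (at x) h)) (at x)"
    using assms by (intro has_derivative_vec_nthI) (simp add: frechet_derivative_works)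
  then show ?thesis by (rule differentiableI)
qed

lemma differentiable_vec_nth:
  "f differentiable (at x) \<Longrightarrow> (\<lambda>y. f y $ i) differentiable (at x)"
  using bounded_linear.has_derivative[OF bounded_linear_vec_nth] unfolding differentiable_def by blast

lemma frechet_derivative_vec_nth:
  assumes "f differentiable (at x)"
  shows "frechet_derivative (\<lambda>y. f y $ i) (at x) h = frechet_derivative f (at x) h $ i"
proof -
  have "(f has_derivative frechet_derivative f (at x)) (at x)"
    using assms frechet_derivative_works by blast
  from bounded_linear.has_derivative[OF bounded_linear_vec_nth this, of i]
  show ?thesis by (rule frechet_derivative_apply)
qed

lemma linear_cart_basis_expansion:
  fixes L :: "real^'n \<Rightarrow> 'b::real_vector"
  assumes "linear L"
  shows "L z = (\<Sum>i\<in>UNIV. z $ i *\<^sub>R L (axis i 1))"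
proof -
  have "L z = L (\<Sum>i\<in>UNIV. z $ i *\<^sub>R axis i 1)"
    using basis_expansion[of z] by (simp add: scalar_mult_eq_scaleR)
  also have "\<dots> = (\<Sum>i\<in>UNIV. z $ i *\<^sub>R L (axis i 1))"
    using assms by (simp add: linear_sum linear_scale)
  finally show ?thesis .
qed

lemma symmetric_matrix_inner:
  fixes H :: "real^'n^'n"
  assumes "transpose H = H"
  shows "(H *v x) \<bullet> y = x \<bullet> (H *v y)"
proof -
  have "(H *v x) \<bullet> y = (x v* transpose H) \<bullet> y" by simp
  also have "\<dots> = x \<bullet> (transpose H *v y)" by (rule dot_lmul_matrix)
  finally show ?thesis using assms by simp
qed

lemma frechet_derivative_flux_deriv:
  fixes f :: "real \<Rightarrow> real^'n::finite"
  assumes "f differentiable (at s)"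
  shows "frechet_derivative f (at s) = (\<lambda>t. t *\<^sub>R flux_deriv f s)"
proof
  fix t :: real
  have "frechet_derivative f (at s) (t *\<^sub>R 1) = t *\<^sub>R frechet_derivative f (at s) 1"
    using linear_frechet_derivative[OF assms] by (rule linear_scale)
  then show "frechet_derivative f (at s) t = t *\<^sub>R flux_deriv f s"
    by (simp add: flux_deriv_def)
qed

lemma has_derivative_compose_flux_deriv:
  fixes f :: "real \<Rightarrow> real^'n::finite" and \<phi> :: "'a::real_normed_vector \<Rightarrow> real"
  assumes "f differentiable (at (\<phi> p))" and "\<phi> differentiable (at p)"
  shows "((\<lambda>q. f (\<phi> q)) has_derivative
           (\<lambda>w. frechet_derivative \<phi> (at p) w *\<^sub>R flux_deriv f (\<phi> p))) (at p)"
proof -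
  have "(f has_derivative (\<lambda>t. t *\<^sub>R flux_deriv f (\<phi> p))) (at (\<phi> p))"
    using frechet_derivative_works[THEN iffD1, OF assms(1)]
    unfolding frechet_derivative_flux_deriv[OF assms(1)] .
  with frechet_derivative_works[THEN iffD1, OF assms(2)] show ?thesis
    by (rule has_derivative_compose)
qed

lemma smooth_on_components_differentiable:
  fixes f :: "real \<Rightarrow> real^'n::finite"
  assumes "\<forall>i. smooth_on UNIV (\<lambda>s. f s $ i)"
  shows "f differentiable (at s)" "flux_deriv f differentiable (at s)"
proof -
  have "set [] \<subseteq> (Basis :: real set)" "set [1] \<subseteq> (Basis :: real set)" by simp_all
  note d = smooth_on_pderivs_differentiable[OF assms[rule_format] open_UNIV UNIV_I this(1)]
    smooth_on_pderivs_differentiable[OF assms[rule_format] open_UNIV UNIV_I this(2)]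
  show fd: "f differentiable (at s)" for s
    using d(1) by (intro differentiable_vec_nthI) simp
  have "flux_deriv f = (\<lambda>s. \<chi> i. pderivs [1] (\<lambda>s. f s $ i) s)"
    by (simp add: fun_eq_iff vec_eq_iff flux_deriv_def frechet_derivative_vec_nth[OF fd])
  then show "flux_deriv f differentiable (at s)"
    using d(2) by (simp add: differentiable_vec_nthI)
qed

section \<open>Gradient and Hessian of the entropy\<close>

lemma frechet_derivative_grad_v:
  assumes "\<eta> differentiable (at y)"
  shows "frechet_derivative \<eta> (at y) = (\<lambda>z. grad_v \<eta> y \<bullet> z)"
proof
  fix z
  show "frechet_derivative \<eta> (at y) z = grad_v \<eta> y \<bullet> z"
    using linear_cart_basis_expansion[OF linear_frechet_derivative[OF assms], of z]
    by (simp add: grad_v_def inner_vec_def mult.commute)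
qed

lemma hess_v_eq_jacobian:
  assumes "grad_v \<eta> differentiable (at y)"
  shows "hess_v \<eta> y = jacobian (grad_v \<eta>) (at y)"
  using frechet_derivative_vec_nth[OF assms]
  by (simp add: hess_v_def jacobian_def matrix_def)

lemma hess_v_symmetric:
  assumes "\<And>v. \<eta> differentiable (at v)" and "grad_v \<eta> differentiable (at y)"
  shows "transpose (hess_v \<eta> y) = hess_v \<eta> y"
proof -
  have "((\<lambda>x. frechet_derivative \<eta> (at x) (axis k 1)) has_derivative
          frechet_derivative (\<lambda>w. grad_v \<eta> w $ k) (at y)) (at y)" for k
    using differentiable_vec_nth[OF assms(2)] by (simp add: grad_v_def frechet_derivative_works[symmetric])
  from second_directional_derivatives_commute[OF open_UNIV UNIV_I _ this this] assms(1)
  have "hess_v \<eta> y $ m $ n = hess_v \<eta> y $ n $ m" for m n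
    by (simp add: hess_v_def)
  then show ?thesis
    by (simp add: vec_eq_iff transpose_def)
qed

lemma has_derivative_compose_grad_v:
  assumes "(\<Phi> has_derivative \<Phi>') (at p)" and "\<eta> differentiable (at (\<Phi> p))"
  shows "((\<lambda>q. \<eta> (\<Phi> q)) has_derivative (\<lambda>w. grad_v \<eta> (\<Phi> p) \<bullet> \<Phi>' w)) (at p)"
proof -
  have "(\<eta> has_derivative (\<lambda>z. grad_v \<eta> (\<Phi> p) \<bullet> z)) (at (\<Phi> p))"
    using frechet_derivative_works[THEN iffD1, OF assms(2)]
    unfolding frechet_derivative_grad_v[OF assms(2)] .
  from has_derivative_compose[OF assms(1) this] show ?thesis .
qed

lemma has_derivative_compose_hess_v:
  assumes "(\<Phi> has_derivative \<Phi>') (at p)" and "grad_v \<eta> differentiable (at (\<Phi> p))"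
  shows "((\<lambda>q. grad_v \<eta> (\<Phi> q)) has_derivative (\<lambda>w. hess_v \<eta> (\<Phi> p) *v \<Phi>' w)) (at p)"
proof -
  have "(grad_v \<eta> has_derivative (\<lambda>z. hess_v \<eta> (\<Phi> p) *v z)) (at (\<Phi> p))"
    using jacobian_works[THEN iffD1, OF assms(2)] unfolding hess_v_eq_jacobian[OF assms(2)] .
  from has_derivative_compose[OF assms(1) this] show ?thesis .
qed

section \<open>Space-time derivatives\<close>

lemma space_time_Basis:
  "((axis i 1, 0) :: (real^'n::finite) \<times> real) \<in> Basis" "((0, 1) :: (real^'n::finite) \<times> real) \<in> Basis"
  by (auto simp: Basis_prod_def Basis_vec_def)

lemma pd_x_eq_pderivs: "pd_x i g = pderivs [(axis i 1, 0)] g"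
  by (simp add: fun_eq_iff pd_x_def)

lemma pd_t_eq_pderivs: "pd_t g = pderivs [(0, 1)] g"
  by (simp add: fun_eq_iff pd_t_def)

lemma smooth_on_differentiable_pd:
  fixes \<phi> :: "(real^'n::finite) \<times> real \<Rightarrow> real"
  assumes "smooth_on S \<phi>" "open S" "p \<in> S"
  shows "\<phi> differentiable (at p)" "pd_x i \<phi> differentiable (at p)" "pd_t \<phi> differentiable (at p)"
  using smooth_on_pderivs_differentiable[OF assms, of "[]"]
    smooth_on_pderivs_differentiable[OF assms, of "[(axis i 1, 0)]"]
    smooth_on_pderivs_differentiable[OF assms, of "[(0, 1)]"]
  by (simp_all add: pd_x_eq_pderivs pd_t_eq_pderivs space_time_Basis)

lemma smooth_on_pd_t_pd_x:
  fixes \<phi> :: "(real^'n::finite) \<times> real \<Rightarrow> real"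
  assumes "smooth_on S \<phi>" "open S" "p \<in> S"
  shows "pd_t (pd_x i \<phi>) p = pd_x i (pd_t \<phi>) p"
  using smooth_on_pderivs_commute[OF assms space_time_Basis(2,1)]
  by (simp add: pd_x_eq_pderivs pd_t_eq_pderivs)

lemma smooth_on_hess_x_symmetric:
  fixes \<phi> :: "(real^'n::finite) \<times> real \<Rightarrow> real"
  assumes "smooth_on S \<phi>" "open S" "p \<in> S"
  shows "transpose (hess_x \<phi> p) = hess_x \<phi> p"
  using smooth_on_pderivs_commute[OF assms space_time_Basis(1) space_time_Basis(1)]
  by (simp add: vec_eq_iff transpose_def hess_x_def pd_x_eq_pderivs)

lemma pd_x_has_derivative: "(g has_derivative g') (at p) \<Longrightarrow> pd_x i g p = g' (axis i 1, 0)"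
  by (simp add: pd_x_def frechet_derivative_apply)

lemma pd_t_has_derivative: "(g has_derivative g') (at p) \<Longrightarrow> pd_t g p = g' (0, 1)"
  by (simp add: pd_t_def frechet_derivative_apply)

lemma has_derivative_grad_x:
  assumes "\<And>i. pd_x i \<phi> differentiable (at p)"
  shows "(grad_x \<phi> has_derivative (\<lambda>w. \<chi> i. frechet_derivative (pd_x i \<phi>) (at p) w)) (at p)"
  using assms by (intro has_derivative_vec_nthI) (simp add: grad_x_def frechet_derivative_works)

lemma grad_x_inner:
  assumes "(a has_derivative a') (at p)"
  shows "grad_x a p \<bullet> v = a' (v, 0)"
proof -
  have "bounded_linear (\<lambda>z. a' (z, 0))"
    using bounded_linear_compose[OF has_derivative_bounded_linear[OF assms]
        bounded_linear_Pair[OF bounded_linear_ident bounded_linear_zero]] .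
  from linear_cart_basis_expansion[OF bounded_linear.linear[OF this], of v]
  show ?thesis
    by (simp add: grad_x_def inner_vec_def pd_x_has_derivative[OF assms] mult.commute)
qed

lemma frechet_derivative_pd_x_spatial:
  assumes "\<And>i. pd_x i \<phi> differentiable (at p)"
  shows "(\<chi> i. frechet_derivative (pd_x i \<phi>) (at p) (v, 0)) = hess_x \<phi> p *v v"
  using grad_x_inner[OF frechet_derivative_works[THEN iffD1, OF assms]]
  by (simp add: vec_eq_iff matrix_vector_mult_def hess_x_def grad_x_def inner_vec_def)

lemma div_x_has_derivative:
  assumes "(Q has_derivative Q') (at p)"
  shows "div_x Q p = (\<Sum>i\<in>UNIV. Q' (axis i 1, 0) $ i)"
  unfolding div_x_def
  using pd_x_has_derivative[OF bounded_linear.has_derivative[OF bounded_linear_vec_nth assms]] by simp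

lemma div_x_scaleR:
  assumes "(a has_derivative a') (at p)" and "(b has_derivative b') (at p)"
  shows "div_x (\<lambda>q. a q *\<^sub>R b q) p = grad_x a p \<bullet> b p + a p * div_x b p"
  using div_x_has_derivative[OF has_derivative_scaleR[OF assms]] div_x_has_derivative[OF assms(2)]
  by (simp add: grad_x_def pd_x_has_derivative[OF assms(1)] inner_vec_def sum.distrib sum_distrib_left
      mult.commute)

lemma div_x_compose:
  assumes "f differentiable (at (\<phi> p))" and "\<phi> differentiable (at p)"
  shows "div_x (\<lambda>q. f (\<phi> q)) p = flux_deriv f (\<phi> p) \<bullet> grad_x \<phi> p"
  using div_x_has_derivative[OF has_derivative_compose_flux_deriv[OF assms]]
  by (simp add: inner_vec_def grad_x_def pd_x_def mult.commute)

lemma conservation_law_pd_t_grad_x: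
  fixes \<phi> :: "(real^'n::finite) \<times> real \<Rightarrow> real" and f :: "real \<Rightarrow> real^'n"
  assumes "open S" "p \<in> S" "smooth_on S \<phi>"
    and "\<And>s. f differentiable (at s)" "\<And>s. flux_deriv f differentiable (at s)"
    and "\<And>q. q \<in> S \<Longrightarrow> pd_t \<phi> q + div_x (\<lambda>q. f (\<phi> q)) q = 0"
  shows "(\<chi> i. pd_t (pd_x i \<phi>) p) = - (hess_x \<phi> p *v flux_deriv f (\<phi> p)
           + (flux_deriv (flux_deriv f) (\<phi> p) \<bullet> grad_x \<phi> p) *\<^sub>R grad_x \<phi> p)"
proof -
  note d = smooth_on_differentiable_pd[OF assms(3,1)]
  have pd_t_eq: "pd_t \<phi> q = - (flux_deriv f (\<phi> q) \<bullet> grad_x \<phi> q)" if "q \<in> S" for q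
    using assms(6)[OF that] div_x_compose[OF assms(4) d(1)[OF that]] by simp
  have D: "((\<lambda>q. - (flux_deriv f (\<phi> q) \<bullet> grad_x \<phi> q)) has_derivative
      (\<lambda>w. - (flux_deriv f (\<phi> p) \<bullet> (\<chi> i. frechet_derivative (pd_x i \<phi>) (at p) w)
              + (frechet_derivative \<phi> (at p) w *\<^sub>R flux_deriv (flux_deriv f) (\<phi> p))
                \<bullet> grad_x \<phi> p))) (at p)"
    by (intro has_derivative_minus has_derivative_inner has_derivative_compose_flux_deriv has_derivative_grad_x
        assms(5) d[OF assms(2)])
  have "pd_x i (pd_t \<phi>) p = pd_x i (\<lambda>q. - (flux_deriv f (\<phi> q) \<bullet> grad_x \<phi> q)) p" for i
    unfolding pd_x_def using frechet_derivative_transform_within_open[OF d(3)[OF assms(2)] assms(1,2) pd_t_eq] by simp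
  also have "\<dots> i = - ((hess_x \<phi> p *v flux_deriv f (\<phi> p)) $ i
                      + grad_x \<phi> p $ i * (flux_deriv (flux_deriv f) (\<phi> p) \<bullet> grad_x \<phi> p))" for i
    \<comment> \<open>symmetry of the spatial Hessian turns f' . (H e_i) into (H f')_i\<close>
    unfolding pd_x_has_derivative[OF D] frechet_derivative_pd_x_spatial[OF d(2)[OF assms(2)]]
      symmetric_matrix_inner[OF smooth_on_hess_x_symmetric[OF assms(3,1,2)], symmetric]
    by (simp add: inner_axis grad_x_def pd_x_def)
  finally show ?thesis
    using smooth_on_pd_t_pd_x[OF assms(3,1,2)] by (simp add: vec_eq_iff)
qed

lemma pd_t_compose_grad_x:
  assumes "\<And>i. pd_x i \<phi> differentiable (at p)" and "\<eta> differentiable (at (grad_x \<phi> p))"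
  shows "pd_t (\<lambda>q. \<eta> (grad_x \<phi> q)) p = grad_v \<eta> (grad_x \<phi> p) \<bullet> (\<chi> i. pd_t (pd_x i \<phi>) p)"
  using pd_t_has_derivative[OF has_derivative_compose_grad_v[OF has_derivative_grad_x[OF assms(1)] assms(2)]]
  by (simp add: pd_t_def)

lemma div_x_grad_v_inner_scaleR:
  fixes g :: "real \<Rightarrow> real^'n::finite"
  assumes "\<phi> differentiable (at p)" "\<And>i. pd_x i \<phi> differentiable (at p)"
    and "grad_v \<eta> differentiable (at (grad_x \<phi> p))" "g differentiable (at (\<phi> p))"
  shows "div_x (\<lambda>q. (grad_v \<eta> (grad_x \<phi> q) \<bullet> grad_x \<phi> q) *\<^sub>R g (\<phi> q)) p
       = grad_v \<eta> (grad_x \<phi> p) \<bullet> (hess_x \<phi> p *v g (\<phi> p))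
         + (hess_v \<eta> (grad_x \<phi> p) *v (hess_x \<phi> p *v g (\<phi> p))) \<bullet> grad_x \<phi> p
         + (grad_v \<eta> (grad_x \<phi> p) \<bullet> grad_x \<phi> p) * (flux_deriv g (\<phi> p) \<bullet> grad_x \<phi> p)"
proof -
  note D = has_derivative_grad_x[OF assms(2)]
  note da = has_derivative_inner[OF has_derivative_compose_hess_v[OF D assms(3)] D]
  show ?thesis
    using div_x_scaleR[OF da has_derivative_compose_flux_deriv[OF assms(4,1)]] div_x_compose[OF assms(4,1)]
    by (simp add: grad_x_inner[OF da] frechet_derivative_pd_x_spatial[OF assms(2)])
qed

theorem lemma1:
  fixes \<Omega> :: "(real^'n::finite) set"
    and T :: real
    and f :: "real \<Rightarrow> real^'n"
    and \<phi> :: "(real^'n) \<times> real \<Rightarrow> real"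
    and \<eta> :: "real^'n \<Rightarrow> real"
  assumes "open \<Omega>" and "connected \<Omega>" and "T > 0"
    and "\<forall>i. smooth_on UNIV (\<lambda>s. f s $ i)"
    and "smooth_on (\<Omega> \<times> {0<..<T}) \<phi>"
    and "\<forall>p \<in> \<Omega> \<times> {0<..<T}. pd_t \<phi> p + div_x (\<lambda>q. f (\<phi> q)) p = 0"
    and "\<forall>v. \<eta> differentiable (at v)"
    and "\<forall>v. grad_v \<eta> differentiable (at v)"
    and "convex_on UNIV \<eta>"
  shows "\<forall>p \<in> \<Omega> \<times> {0<..<T}.
           pd_t (\<lambda>q. \<eta> (grad_x \<phi> q)) p
           + div_x (\<lambda>q. (grad_v \<eta> (grad_x \<phi> q) \<bullet> grad_x \<phi> q) *\<^sub>R flux_deriv f (\<phi> q)) p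
         = (hess_v \<eta> (grad_x \<phi> p) *v grad_x \<phi> p) \<bullet> (hess_x \<phi> p *v flux_deriv f (\<phi> p))"
proof
  fix p assume p: "p \<in> \<Omega> \<times> {0<..<T}"
  have S: "open (\<Omega> \<times> {0<..<T})" using assms(1) by (simp add: open_Times)
  note f = smooth_on_components_differentiable[OF assms(4)]
  note d = smooth_on_differentiable_pd[OF assms(5) S p]
  have "pd_t (\<lambda>q. \<eta> (grad_x \<phi> q)) p = grad_v \<eta> (grad_x \<phi> p) \<bullet> (\<chi> i. pd_t (pd_x i \<phi>) p)"
    using pd_t_compose_grad_x d(2) assms(7) by blast
  also have "(\<chi> i. pd_t (pd_x i \<phi>) p) = - (hess_x \<phi> p *v flux_deriv f (\<phi> p)
      + (flux_deriv (flux_deriv f) (\<phi> p) \<bullet> grad_x \<phi> p) *\<^sub>R grad_x \<phi> p)"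
    using conservation_law_pd_t_grad_x[OF S p assms(5) f] assms(6) by blast
  finally have "pd_t (\<lambda>q. \<eta> (grad_x \<phi> q)) p
      = - (grad_v \<eta> (grad_x \<phi> p) \<bullet> (hess_x \<phi> p *v flux_deriv f (\<phi> p)))
      - (flux_deriv (flux_deriv f) (\<phi> p) \<bullet> grad_x \<phi> p) * (grad_v \<eta> (grad_x \<phi> p) \<bullet> grad_x \<phi> p)"
    by (simp add: inner_diff_right)
  moreover have "(hess_v \<eta> (grad_x \<phi> p) *v (hess_x \<phi> p *v flux_deriv f (\<phi> p))) \<bullet> grad_x \<phi> p
      = (hess_v \<eta> (grad_x \<phi> p) *v grad_x \<phi> p) \<bullet> (hess_x \<phi> p *v flux_deriv f (\<phi> p))"
    using symmetric_matrix_inner[OF hess_v_symmetric[OF assms(7)[rule_format] assms(8)[rule_format]]]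
    by (metis inner_commute)
  ultimately show "pd_t (\<lambda>q. \<eta> (grad_x \<phi> q)) p
      + div_x (\<lambda>q. (grad_v \<eta> (grad_x \<phi> q) \<bullet> grad_x \<phi> q) *\<^sub>R flux_deriv f (\<phi> q)) p
      = (hess_v \<eta> (grad_x \<phi> p) *v grad_x \<phi> p) \<bullet> (hess_x \<phi> p *v flux_deriv f (\<phi> p))"
    using div_x_grad_v_inner_scaleR[OF d(1,2) assms(8)[rule_format] f(2)] by simp
qed

end
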